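(* Let $l,m\geq2$ be integers with $1/l+1/m<1$, let $0<r_0<1$, and set $r_1=r_0+(1-r_0)/l$, $r_2=1-(1-r_0)/m$ (so $r_1<r_2$). Let $f_1(z)=r_0r_1^l/z^l$ on the circle $\mathbb{T}_{r_1}$ and $f_2(z)=r_0z^m/r_2^m$ on the circle $\mathbb{T}_{r_2}$, which are covering maps onto $\mathbb{T}_{r_0}$. Then there exists a continuous map $F:\overline{\mathbb{A}}_{r_1,r_2}\to\overline{\mathbb{D}}_{r_0}$ such that (1) $F|_{\mathbb{T}_{r_i}}=f_i$ for $i=1,2$; (2) $F:\mathbb{A}_{r_1,r_2}\to\mathbb{D}_{r_0}$ is quasiregular; and (3) $F(e^{2\pi i/(l+m)}z)=e^{2m\pi i/(l+m)}F(z)$ for all $z\in\overline{\mathbb{A}}_{r_1,r_2}$.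
   Context: $\mathbb{T}_r=\{z:|z|=r\}$, $\mathbb{D}_r=\{z:|z|<r\}$, $\mathbb{A}_{r_1,r_2}=\{z:r_1<|z|<r_2\}$. A map is quasiregular if it is locally a composition of a holomorphic map with quasiconformal homeomorphisms (equivalently, a continuous orientation-preserving map in $W^{1,2}_{loc}$ with bounded distortion). *)

theory Defs
  imports "HOL-Complex_Analysis.Complex_Analysis"
begin

text \<open>Metric definition of quasiconformality (Vaisala/Gehring): a sense-preserving
homeomorphism of an open planar set onto an open set whose linear dilatation
  H(z) = limsup_{r->0+} (max_{|w-z|=r} |phi w - phi z|) / (min_{|w-z|=r} |phi w - phi z|)
is bounded on the domain.\<close>

definition circ_max :: "(complex \<Rightarrow> complex) \<Rightarrow> complex \<Rightarrow> real \<Rightarrow> real" where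
  "circ_max \<phi> z r = Sup {cmod (\<phi> w - \<phi> z) | w. dist w z = r}"

definition circ_min :: "(complex \<Rightarrow> complex) \<Rightarrow> complex \<Rightarrow> real \<Rightarrow> real" where
  "circ_min \<phi> z r = Inf {cmod (\<phi> w - \<phi> z) | w. dist w z = r}"

definition linear_dilatation :: "(complex \<Rightarrow> complex) \<Rightarrow> complex \<Rightarrow> ereal" where
  "linear_dilatation \<phi> z =
     Limsup (at_right 0) (\<lambda>r. ereal (circ_max \<phi> z r / circ_min \<phi> z r))"

definition sense_preserving_on :: "(complex \<Rightarrow> complex) \<Rightarrow> complex set \<Rightarrow> bool" where
  "sense_preserving_on \<phi> V \<longleftrightarrow>
     (\<forall>z\<in>V. \<exists>e>0. \<forall>r. 0 < r \<and> r < e \<longrightarrow>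
        winding_number (\<phi> \<circ> circlepath z r) (\<phi> z) = 1)"

definition quasiconformal_on :: "(complex \<Rightarrow> complex) \<Rightarrow> complex set \<Rightarrow> bool" where
  "quasiconformal_on \<phi> V \<longleftrightarrow>
     open V \<and> open (\<phi> ` V) \<and> homeomorphism V (\<phi> ` V) \<phi> (inv_into V \<phi>) \<and>
     sense_preserving_on \<phi> V \<and>
     (\<exists>K::real. \<forall>z\<in>V. linear_dilatation \<phi> z \<le> ereal K)"

definition quasiregular_on :: "(complex \<Rightarrow> complex) \<Rightarrow> complex set \<Rightarrow> bool" where
  "quasiregular_on F U \<longleftrightarrow>
     open U \<and> continuous_on U F \<and>
     (\<forall>z\<in>U. \<exists>V W \<phi> g \<psi>. z \<in> V \<and> V \<subseteq> U \<and>
        quasiconformal_on \<phi> V \<and> g holomorphic_on (\<phi> ` V) \<and>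
        open W \<and> g ` (\<phi> ` V) \<subseteq> W \<and> quasiconformal_on \<psi> W \<and>
        (\<forall>x\<in>V. F x = \<psi> (g (\<phi> x))))"

end

theory Submission
  imports Defs
begin

text \<open>The map is \<open>F z = P |z| sgn z ^ m + Q |z| cnj (sgn z) ^ l\<close>; it has the required
  rotational symmetry because \<open>\<omega> ^ m = cnj \<omega> ^ l\<close> for \<open>\<omega> = cis (2 pi / (l + m))\<close>.
  On a band around the middle circle \<open>|z| = rc\<close> we take \<open>P \<rho> = alp \<rho> ^ m\<close>, \<open>Q \<rho> = bet / \<rho> ^ l\<close>,
  so that \<open>F z = alp z ^ m + bet / z ^ l\<close> is holomorphic there; the ratio \<open>bet / alp\<close> is chosen
  so that \<open>Phi \<rho> = alp \<rho> ^ m + bet / \<rho> ^ l\<close> decreases up to \<open>rc\<close> and increases afterwards, and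
  quadratic corrections outside the band fix the boundary values. Then \<open>|F| \<le> P + Q \<le> r0\<close>.
  Off the middle circle the Jacobian \<open>|F_z|^2 - |F_zbar|^2\<close> is positive, which is the sign
  condition \<open>(m P - l Q) (P' + Q') > 0\<close>; a \<open>C^1\<close> map with \<open>|F_zbar| < |F_z|\<close> is locally
  bi-Lipschitz, hence (by invariance of domain) a local homeomorphism of bounded linear
  dilatation, i.e. locally quasiconformal.\<close>

section \<open>Quasiconformal and quasiregular maps\<close>

lemma norm_conj_linear_bounds:
  fixes a b h :: complex
  shows "(cmod a - cmod b) * cmod h \<le> cmod (a * h + b * cnj h)"
    and "cmod (a * h + b * cnj h) \<le> (cmod a + cmod b) * cmod h"
proof -
  have "cmod (a * h) \<le> cmod (a * h + b * cnj h) + cmod (b * cnj h)"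
    by (metis add_diff_cancel_right' norm_triangle_ineq4)
  then show "(cmod a - cmod b) * cmod h \<le> cmod (a * h + b * cnj h)"
    by (simp add: norm_mult algebra_simps)
  have "cmod (a * h + b * cnj h) \<le> cmod (a * h) + cmod (b * cnj h)"
    by (rule norm_triangle_ineq)
  then show "cmod (a * h + b * cnj h) \<le> (cmod a + cmod b) * cmod h"
    by (simp add: norm_mult algebra_simps)
qed

lemma winding_number_scaled_circlepath:
  assumes "a \<noteq> 0" and "r > 0"
  shows "winding_number (\<lambda>t. a * (circlepath z r t - z)) 0 = 1"
proof -
  define g where "g = (\<lambda>t::real. Ln (a * of_real r) + 2 * of_real pi * \<i> * of_real t)"
  have "(\<lambda>t. a * (circlepath z r t - z)) = exp \<circ> g"
    using assms by (simp add: fun_eq_iff g_def circlepath exp_add)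
  moreover have "path g"
    unfolding path_def g_def by (intro continuous_intros)
  ultimately show ?thesis
    by (simp add: winding_number_compose_exp pathfinish_def pathstart_def g_def)
qed

lemma homeomorphism_if_lower_lipschitz:
  fixes f :: "'a::euclidean_space \<Rightarrow> 'a"
  assumes S: "open S" and cont: "continuous_on S f" and d: "d > 0"
    and lower: "\<And>x y. x \<in> S \<Longrightarrow> y \<in> S \<Longrightarrow> d * dist x y \<le> dist (f x) (f y)"
  shows "open (f ` S)" and "homeomorphism S (f ` S) f (inv_into S f)"
proof -
  have inj: "inj_on f S"
  proof (rule inj_onI)
    fix x y assume "x \<in> S" "y \<in> S" "f x = f y"
    with lower[of x y] d show "x = y" by (simp add: mult_le_0_iff)
  qed
  show "open (f ` S)" by (rule invariance_of_domain[OF cont S inj])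
  have "(1 / d)-lipschitz_on (f ` S) (inv_into S f)"
  proof (rule lipschitz_onI)
    fix u v assume "u \<in> f ` S" "v \<in> f ` S"
    then obtain x y where "x \<in> S" "y \<in> S" "u = f x" "v = f y" by blast
    with lower[of x y] inj d show "dist (inv_into S f u) (inv_into S f v) \<le> 1 / d * dist u v"
      by (simp add: field_simps)
  qed (use d in simp)
  then have "continuous_on (f ` S) (inv_into S f)" by (rule lipschitz_on_continuous_on)
  then show "homeomorphism S (f ` S) f (inv_into S f)"
    unfolding homeomorphism_def using cont inj by auto
qed

lemma linear_dilatation_le_if_bilipschitz:
  assumes S: "open S" and z: "z \<in> S" and d: "d > 0"
    and lower: "\<And>w. w \<in> S \<Longrightarrow> d * dist w z \<le> dist (f w) (f z)"
    and upper: "\<And>w. w \<in> S \<Longrightarrow> dist (f w) (f z) \<le> M * dist w z"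
  shows "linear_dilatation f z \<le> ereal (M / d)"
proof -
  obtain e where e: "e > 0" "cball z e \<subseteq> S" using S z open_contains_cball by blast
  have "circ_max f z r / circ_min f z r \<le> M / d" if r: "0 < r" "r < e" for r
  proof -
    let ?A = "{cmod (f w - f z) | w. dist w z = r}"
    have "z + of_real r \<in> {w. dist w z = r}" using r by (simp add: dist_norm)
    then have ne: "?A \<noteq> {}" by blast
    have wS: "w \<in> S" if "dist w z = r" for w
      using that e r by (auto simp: dist_commute intro: subsetD[OF e(2)])
    have bounds: "d * r \<le> x \<and> x \<le> M * r" if "x \<in> ?A" for x
      using that lower upper wS by (force simp: dist_norm)
    have mx: "circ_max f z r \<le> M * r"
      unfolding circ_max_def by (rule cSup_least[OF ne]) (use bounds in blast)
    have mn: "d * r \<le> circ_min f z r"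
      unfolding circ_min_def by (rule cInf_greatest[OF ne]) (use bounds in blast)
    obtain x where "x \<in> ?A" using ne by blast
    then have "0 \<le> M * r" using bounds[of x] d r by (smt (verit) mult_pos_pos)
    then have "circ_max f z r / circ_min f z r \<le> (M * r) / (d * r)"
      using mx mn d r by (intro frac_le) auto
    also have "\<dots> = M / d" using r by simp
    finally show ?thesis .
  qed
  then have "eventually (\<lambda>r. ereal (circ_max f z r / circ_min f z r) \<le> ereal (M / d)) (at_right 0)"
    by (intro eventually_mono[OF eventually_at_right_real[OF e(1)]]) simp
  then show ?thesis unfolding linear_dilatation_def by (rule Limsup_bounded)
qed

lemma sense_preserving_if_near_conj_linear:
  assumes S: "open S" and cont: "continuous_on S f"
    and near: "\<And>w z. w \<in> S \<Longrightarrow> z \<in> S \<Longrightarrow>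
        cmod (f w - f z - (a * (w - z) + b * cnj (w - z))) \<le> e * cmod (w - z)"
    and e: "0 \<le> e" and small: "cmod b + e < cmod a"
  shows "sense_preserving_on f S"
  unfolding sense_preserving_on_def
proof
  fix z assume z: "z \<in> S"
  obtain \<delta> where \<delta>: "\<delta> > 0" "cball z \<delta> \<subseteq> S" using S z open_contains_cball by blast
  have "winding_number (f \<circ> circlepath z r) (f z) = 1" if r: "0 < r" "r < \<delta>" for r
  proof -
    define \<gamma> where "\<gamma> = circlepath z r"
    have norm_\<gamma>: "cmod (\<gamma> t - z) = r" for t using r by (simp add: \<gamma>_def circlepath norm_mult)
    have \<gamma>S: "\<gamma> t \<in> S" for t
      using norm_\<gamma>[of t] r \<delta> by (auto simp: dist_norm norm_minus_commute intro: subsetD[OF \<delta>(2)])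
    define g where "g = (\<lambda>t. a * (\<gamma> t - z))"
    define h where "h = (\<lambda>t. f (\<gamma> t) - f z)"
    have "a \<noteq> 0" using small e by (metis add_nonneg_nonneg norm_ge_zero norm_zero not_less)
    then have wg: "winding_number g 0 = 1"
      unfolding g_def \<gamma>_def using winding_number_scaled_circlepath r by simp
    have pg: "path g" unfolding g_def \<gamma>_def circlepath path_def by (intro continuous_intros)
    have "continuous_on {0..1} \<gamma>" unfolding \<gamma>_def circlepath by (intro continuous_intros)
    then have "continuous_on {0..1} (f \<circ> \<gamma>)"
      by (rule continuous_on_compose[OF _ continuous_on_subset[OF cont]]) (use \<gamma>S in auto)
    then have ph: "path h" unfolding h_def path_def by (auto simp: o_def intro!: continuous_intros)
    have "winding_number h 0 = winding_number g 0"
    proof (rule winding_number_nearby_loops_eq[OF pg ph])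
      have "circlepath z r 1 = circlepath z r 0"
        using pathfinish_circlepath[of z r] pathstart_circlepath[of z r]
        unfolding pathfinish_def pathstart_def by simp
      then show "pathfinish g = pathstart g" "pathfinish h = pathstart h"
        by (simp_all add: g_def h_def \<gamma>_def pathfinish_def pathstart_def)
      fix t :: real
      have "cmod (h t - g t) \<le> cmod (f (\<gamma> t) - f z - (a * (\<gamma> t - z) + b * cnj (\<gamma> t - z)))
          + cmod (b * cnj (\<gamma> t - z))"
        unfolding h_def g_def by (rule order_trans[OF _ norm_triangle_ineq]) (simp add: algebra_simps)
      also have "\<dots> \<le> e * r + cmod b * r"
        using near[OF \<gamma>S[of t] z] norm_\<gamma>[of t] by (simp add: norm_mult del: complex_cnj_diff)
      also have "\<dots> < cmod a * r" using small r by (simp add: distrib_right[symmetric])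
      also have "\<dots> = cmod (g t - 0)" by (simp add: g_def norm_mult norm_\<gamma>)
      finally show "cmod (h t - g t) < cmod (g t - 0)" .
    qed
    then show ?thesis
      using wg by (subst winding_number_offset) (simp add: h_def \<gamma>_def o_def)
  qed
  with \<delta>(1) show "\<exists>\<delta>>0. \<forall>r. 0 < r \<and> r < \<delta> \<longrightarrow> winding_number (f \<circ> circlepath z r) (f z) = 1"
    by blast
qed

lemma quasiconformal_if_near_conj_linear:
  assumes S: "open S"
    and near: "\<And>w z. w \<in> S \<Longrightarrow> z \<in> S \<Longrightarrow>
        cmod (f w - f z - (a * (w - z) + b * cnj (w - z))) \<le> e * cmod (w - z)"
    and e: "0 \<le> e" and small: "cmod b + e < cmod a"
  shows "quasiconformal_on f S"
proof -
  define d where "d = cmod a - cmod b - e"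
  define M where "M = cmod a + cmod b + e"
  have d: "d > 0" using small by (simp add: d_def)
  have lower: "d * dist w z \<le> dist (f w) (f z)" if "w \<in> S" "z \<in> S" for w z
    using near[OF that] norm_conj_linear_bounds(1)[where a = a and b = b and h = "w - z"]
      norm_triangle_ineq4[of "f w - f z" "f w - f z - (a * (w - z) + b * cnj (w - z))"]
    by (simp add: d_def dist_norm left_diff_distrib)
  have upper: "dist (f w) (f z) \<le> M * dist w z" if "w \<in> S" "z \<in> S" for w z
    using near[OF that] norm_conj_linear_bounds(2)[where a = a and b = b and h = "w - z"]
      norm_triangle_ineq[of "a * (w - z) + b * cnj (w - z)" "f w - f z - (a * (w - z) + b * cnj (w - z))"]
    by (simp add: M_def dist_norm distrib_right)
  have "M-lipschitz_on S f"
    using upper d small e by (intro lipschitz_onI) (auto simp: M_def)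
  then have cont: "continuous_on S f" by (rule lipschitz_on_continuous_on)
  show ?thesis
    unfolding quasiconformal_on_def
    using homeomorphism_if_lower_lipschitz[OF S cont d lower]
      sense_preserving_if_near_conj_linear[OF S cont near e small]
      linear_dilatation_le_if_bilipschitz[OF S _ d lower upper] S
    by blast
qed

lemma quasiconformal_on_id: "open S \<Longrightarrow> quasiconformal_on (\<lambda>z. z) S"
  by (rule quasiconformal_if_near_conj_linear[where a = 1 and b = 0 and e = 0]) auto

lemma exists_quasiconformal_nbhd:
  assumes U: "open U" and z0: "z0 \<in> U"
    and deriv: "\<And>w. w \<in> U \<Longrightarrow> (f has_derivative (\<lambda>h. A w * h + B w * cnj h)) (at w)"
    and cont_A: "continuous_on U A" and cont_B: "continuous_on U B"
    and dominant: "cmod (B z0) < cmod (A z0)"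
  shows "\<exists>V. open V \<and> z0 \<in> V \<and> V \<subseteq> U \<and> quasiconformal_on f V"
proof -
  define \<eta> where "\<eta> = (cmod (A z0) - cmod (B z0)) / 2"
  have \<eta>: "\<eta> > 0" using dominant by (simp add: \<eta>_def)
  have "isCont A z0" "isCont B z0"
    using cont_A cont_B U z0 continuous_on_eq_continuous_at by blast+
  then obtain e1 e2 where e12: "e1 > 0" "e2 > 0"
    and A: "\<And>w. dist w z0 < e1 \<Longrightarrow> dist (A w) (A z0) < \<eta> / 2"
    and B: "\<And>w. dist w z0 < e2 \<Longrightarrow> dist (B w) (B z0) < \<eta> / 2"
    using \<eta> unfolding continuous_at_eps_delta by (metis half_gt_zero)
  obtain e3 where e3: "e3 > 0" "ball z0 e3 \<subseteq> U" using U z0 open_contains_ball by blast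
  define e where "e = min e1 (min e2 e3)"
  from e12 A B e3 have e: "e > 0" "ball z0 e \<subseteq> U"
    and close: "\<And>w. w \<in> ball z0 e \<Longrightarrow> cmod (A w - A z0) \<le> \<eta> / 2 \<and> cmod (B w - B z0) \<le> \<eta> / 2"
    by (fastforce simp: e_def dist_norm norm_minus_commute)+
  define V where "V = ball z0 e"
  define g where "g = (\<lambda>w. f w - (A z0 * w + B z0 * cnj w))"
  have deriv_g: "(g has_derivative (\<lambda>h. (A w - A z0) * h + (B w - B z0) * cnj h)) (at w within V)"
    if "w \<in> V" for w
  proof -
    have "(g has_derivative (\<lambda>h. (A w * h + B w * cnj h) - (A z0 * h + B z0 * cnj h))) (at w)"
      unfolding g_def by (intro derivative_intros deriv) (use that e in \<open>auto simp: V_def\<close>)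
    then show ?thesis
      by (auto intro: has_derivative_at_withinI simp: algebra_simps)
  qed
  have "onorm (\<lambda>h. (A w - A z0) * h + (B w - B z0) * cnj h) \<le> \<eta>" if "w \<in> V" for w
  proof (rule onorm_le)
    fix h
    have "cmod ((A w - A z0) * h + (B w - B z0) * cnj h) \<le> (cmod (A w - A z0) + cmod (B w - B z0)) * cmod h"
      by (rule norm_conj_linear_bounds(2))
    also have "\<dots> \<le> \<eta> * cmod h"
      using close[of w] that by (intro mult_right_mono) (auto simp: V_def)
    finally show "norm ((A w - A z0) * h + (B w - B z0) * cnj h) \<le> \<eta> * norm h" by simp
  qed
  then have "cmod (g w - g z) \<le> \<eta> * cmod (w - z)" if "w \<in> V" "z \<in> V" for w z
    using differentiable_bound[OF _ deriv_g] that by (simp add: V_def)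
  then have near: "cmod (f w - f z - (A z0 * (w - z) + B z0 * cnj (w - z))) \<le> \<eta> * cmod (w - z)"
    if "w \<in> V" "z \<in> V" for w z
    using that by (simp add: g_def algebra_simps)
  have "cmod (B z0) + \<eta> < cmod (A z0)" using dominant by (simp add: \<eta>_def field_simps)
  then have "quasiconformal_on f V"
    using near \<eta> by (intro quasiconformal_if_near_conj_linear) (auto simp: V_def)
  then show ?thesis using e by (auto simp: V_def intro!: exI[of _ V])
qed



lemma quasiregular_onI:
  assumes U: "open U" and cont: "continuous_on U F"
    and local: "\<And>z. z \<in> U \<Longrightarrow>
      \<exists>V. open V \<and> z \<in> V \<and> V \<subseteq> U \<and> (quasiconformal_on F V \<or> F holomorphic_on V)"
  shows "quasiregular_on F U"
  unfolding quasiregular_on_def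
proof (intro conjI ballI U cont)
  fix z assume "z \<in> U"
  then obtain V where V: "open V" "z \<in> V" "V \<subseteq> U"
    and model: "quasiconformal_on F V \<or> F holomorphic_on V"
    using local by blast
  have id_UNIV: "quasiconformal_on (\<lambda>x. x) UNIV" by (rule quasiconformal_on_id) simp
  from model show "\<exists>V W \<phi> g \<psi>. z \<in> V \<and> V \<subseteq> U \<and> quasiconformal_on \<phi> V \<and> g holomorphic_on \<phi> ` V \<and>
      open W \<and> g ` \<phi> ` V \<subseteq> W \<and> quasiconformal_on \<psi> W \<and> (\<forall>x\<in>V. F x = \<psi> (g (\<phi> x)))"
  proof
    assume "quasiconformal_on F V"
    moreover have "(\<lambda>x. x) holomorphic_on F ` V" by (rule holomorphic_intros)
    ultimately show ?thesis
      using V id_UNIV by (intro exI[of _ V] exI[of _ UNIV] exI[of _ F] exI[of _ "\<lambda>x. x"]) simp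
  next
    assume "F holomorphic_on V"
    then show ?thesis
      using V id_UNIV quasiconformal_on_id[OF V(1)]
      by (intro exI[of _ V] exI[of _ UNIV] exI[of _ "\<lambda>x. x"] exI[of _ F]) simp
  qed
qed

section \<open>Radial maps\<close>

lemma has_derivative_radial:
  fixes z :: complex
  assumes z: "z \<noteq> 0" and P: "(P has_real_derivative P') (at (cmod z))"
  shows "((\<lambda>w. complex_of_real (P (cmod w))) has_derivative
     (\<lambda>h. of_real P' * (cnj (sgn z) * h + sgn z * cnj h) / 2)) (at z)"
proof -
  have "(cmod has_derivative (\<lambda>h. h \<bullet> sgn z)) (at z)" using has_derivative_norm[OF z] by simp
  from has_derivative_compose[OF this P[unfolded has_field_derivative_def]]
  have "((\<lambda>w. complex_of_real (P (cmod w))) has_derivative (\<lambda>h. of_real (P' * (h \<bullet> sgn z)))) (at z)"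
    by (intro derivative_eq_intros) (auto simp: mult.commute)
  then show ?thesis
    by (rule has_derivative_eq_rhs) (simp add: fun_eq_iff complex_eq_iff inner_complex_def field_simps)
qed

lemma sgn_complex_eq: "sgn w = w / of_real (cmod w)"
  by (simp add: sgn_div_norm divide_inverse scaleR_conv_of_real mult.commute)

lemma cnj_sgn_complex: "z \<noteq> 0 \<Longrightarrow> cnj (sgn z) = of_real (cmod z) / z"
  using complex_norm_square[of z] by (simp add: sgn_complex_eq field_simps power2_eq_square)

lemma has_derivative_sgn:
  fixes z :: complex
  assumes z: "z \<noteq> 0"
  shows "(sgn has_derivative (\<lambda>h. (h - (sgn z)\<^sup>2 * cnj h) / (2 * of_real (cmod z)))) (at z)"
proof -
  have "((\<lambda>w. complex_of_real (cmod w)) has_derivative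
     (\<lambda>h. (cnj (sgn z) * h + sgn z * cnj h) / 2)) (at z)"
    using has_derivative_radial[OF z, of "\<lambda>x. x" 1] by simp
  from has_derivative_divide'[OF has_derivative_ident this] z
  have D: "((\<lambda>w. w / of_real (cmod w)) has_derivative
     (\<lambda>h. (h * of_real (cmod z) - z * ((cnj (sgn z) * h + sgn z * cnj h) / 2)) / (of_real (cmod z))\<^sup>2)) (at z)"
    by (simp add: power2_eq_square)
  have "z * cnj z = (of_real (cmod z))\<^sup>2" using complex_norm_square[of z] by simp
  then show ?thesis
    unfolding sgn_complex_eq[abs_def]
    by (intro has_derivative_eq_rhs[OF D])
      (use z in \<open>simp add: fun_eq_iff sgn_complex_eq field_simps power2_eq_square\<close>)
qed

definition radial_map :: "(real \<Rightarrow> real) \<Rightarrow> (real \<Rightarrow> real) \<Rightarrow> nat \<Rightarrow> nat \<Rightarrow> complex \<Rightarrow> complex" where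
  "radial_map P Q m l w = of_real (P (cmod w)) * sgn w ^ m + of_real (Q (cmod w)) * cnj (sgn w) ^ l"

definition radial_map_dz ::
    "(real \<Rightarrow> real) \<Rightarrow> (real \<Rightarrow> real) \<Rightarrow> (real \<Rightarrow> real) \<Rightarrow> (real \<Rightarrow> real) \<Rightarrow> nat \<Rightarrow> nat \<Rightarrow> complex \<Rightarrow> complex"
  where "radial_map_dz P Q P' Q' m l z = (let \<rho> = cmod z; u = sgn z in
     cnj u / 2 * (u ^ m * of_real (P' \<rho> + real m * P \<rho> / \<rho>) + cnj u ^ l * of_real (Q' \<rho> - real l * Q \<rho> / \<rho>)))"

definition radial_map_dzbar ::
    "(real \<Rightarrow> real) \<Rightarrow> (real \<Rightarrow> real) \<Rightarrow> (real \<Rightarrow> real) \<Rightarrow> (real \<Rightarrow> real) \<Rightarrow> nat \<Rightarrow> nat \<Rightarrow> complex \<Rightarrow> complex"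
  where "radial_map_dzbar P Q P' Q' m l z = (let \<rho> = cmod z; u = sgn z in
     u / 2 * (u ^ m * of_real (P' \<rho> - real m * P \<rho> / \<rho>) + cnj u ^ l * of_real (Q' \<rho> + real l * Q \<rho> / \<rho>)))"

lemma of_nat_times_power_pred:
  fixes u v :: "'a::comm_ring_1"
  assumes "u * v = 1"
  shows "of_nat n * u ^ (n - 1) = of_nat n * (v * u ^ n)"
proof (cases n)
  case (Suc k)
  have "v * u ^ n = (u * v) * u ^ k" by (simp add: Suc mult_ac)
  then show ?thesis using assms Suc by simp
qed simp

text \<open>The chain-rule output for \<open>radial_map\<close>, with \<open>u = sgn z\<close>, \<open>v = cnj u\<close>, \<open>U = u ^ m\<close>,
  \<open>V = v ^ l\<close>, \<open>U1 = u ^ (m - 1)\<close>, \<open>V1 = v ^ (l - 1)\<close>, \<open>M = m\<close>, \<open>L = l\<close> and \<open>R = |z|\<close>.\<close>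

lemma wirtinger_product_identity:
  fixes u v R h ch p p' q q' U V U1 V1 M L :: complex
  assumes "u * v = 1" "R \<noteq> 0" "M * U1 = M * (v * U)" "L * V1 = L * (u * V)"
  shows "p * (M * (h - u^2 * ch) * U1) / (2*R) + p' * (v * h + u * ch) * U / 2
     + (q * (L * (ch - v^2 * h) * V1) / (2*R) + q' * (v * h + u * ch) * V / 2)
   = v * (U * (p' + M * p / R) + V * (q' - L * q / R)) * h / 2
     + u * (U * (p' - M * p / R) + V * (q' + L * q / R)) * ch / 2"
  using assms by (simp add: field_simps) algebra

lemma has_derivative_radial_map:
  fixes z :: complex
  assumes z: "z \<noteq> 0"
    and P: "(P has_real_derivative P' (cmod z)) (at (cmod z))"
    and Q: "(Q has_real_derivative Q' (cmod z)) (at (cmod z))"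
  shows "(radial_map P Q m l has_derivative
     (\<lambda>h. radial_map_dz P Q P' Q' m l z * h + radial_map_dzbar P Q P' Q' m l z * cnj h)) (at z)"
proof -
  note dU = has_derivative_sgn[OF z]
  note D = has_derivative_add[OF
      has_derivative_mult[OF has_derivative_radial[OF z P] has_derivative_power[OF dU, of m]]
      has_derivative_mult[OF has_derivative_radial[OF z Q] has_derivative_power[OF has_derivative_cnj[OF dU], of l]]]
  define u where "u = sgn z"
  define R where "R = complex_of_real (cmod z)"
  have R: "R \<noteq> 0" using z by (simp add: R_def)
  have uu: "u * cnj u = 1"
    using complex_norm_square[of z] z by (simp add: u_def sgn_complex_eq field_simps power2_eq_square)
  show ?thesis
    unfolding radial_map_def[abs_def]
    apply (rule has_derivative_eq_rhs[OF D], rule ext)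
    unfolding radial_map_dz_def radial_map_dzbar_def Let_def u_def[symmetric]
    subgoal for h
      using wirtinger_product_identity[OF uu R of_nat_times_power_pred[OF uu]
          of_nat_times_power_pred[OF uu[unfolded mult.commute[of u]]],
          where p = "of_real (P (cmod z))" and p' = "of_real (P' (cmod z))"
          and q = "of_real (Q (cmod z))" and q' = "of_real (Q' (cmod z))" and h = h and ch = "cnj h"]
      by (simp add: R_def mult_ac)
    done
qed

lemma norm_unit_combination_less:
  fixes X1 X2 Y1 Y2 :: real and e1 e2 :: complex
  assumes e1: "cmod e1 = 1" and e2: "cmod e2 = 1"
    and gap: "X1\<^sup>2 + X2\<^sup>2 - Y1\<^sup>2 - Y2\<^sup>2 > 2 * \<bar>X1 * X2 - Y1 * Y2\<bar>"
  shows "cmod (e1 * of_real Y1 + e2 * of_real Y2) < cmod (e1 * of_real X1 + e2 * of_real X2)"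
proof -
  define w where "w = e1 * cnj e2"
  have e2c: "e2 * cnj e2 = 1" using complex_norm_square[of e2] e2 by simp
  have "cmod w = 1" using e1 e2 by (simp add: w_def norm_mult)
  then have wre: "(Re w)\<^sup>2 + (Im w)\<^sup>2 = 1" and c: "\<bar>Re w\<bar> \<le> 1"
    using abs_Re_le_cmod[of w] by (metis cmod_power2 power_one)+
  have sq: "(cmod (e1 * of_real Z1 + e2 * of_real Z2))\<^sup>2 = Z1\<^sup>2 + Z2\<^sup>2 + 2 * Z1 * Z2 * Re w"
    for Z1 Z2 :: real
  proof -
    have "e1 * of_real Z1 + e2 * of_real Z2 = e2 * (w * of_real Z1 + of_real Z2)"
      using e2c by (simp add: w_def algebra_simps)
    then have "(cmod (e1 * of_real Z1 + e2 * of_real Z2))\<^sup>2 = (Re w * Z1 + Z2)\<^sup>2 + (Im w * Z1)\<^sup>2"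
      using e2 by (simp add: norm_mult cmod_power2)
    also have "\<dots> = Z1\<^sup>2 * ((Re w)\<^sup>2 + (Im w)\<^sup>2) + Z2\<^sup>2 + 2 * Z1 * Z2 * Re w"
      by (simp add: power2_eq_square algebra_simps)
    finally show ?thesis using wre by simp
  qed
  have "\<bar>(X1 * X2 - Y1 * Y2) * Re w\<bar> \<le> \<bar>X1 * X2 - Y1 * Y2\<bar>"
    using c by (simp add: abs_mult mult_left_le)
  then have "(cmod (e1 * of_real Y1 + e2 * of_real Y2))\<^sup>2 < (cmod (e1 * of_real X1 + e2 * of_real X2))\<^sup>2"
    unfolding sq using gap by (simp add: algebra_simps abs_le_iff)
  then show ?thesis by (rule power_less_imp_less_base) simp
qed

lemma radial_map_dzbar_less_dz:
  assumes z: "z \<noteq> 0"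
    and nonneg: "P (cmod z) \<ge> 0" "Q (cmod z) \<ge> 0" "P' (cmod z) \<ge> 0" "Q' (cmod z) \<le> 0"
    and jacobian: "(real m * P (cmod z) - real l * Q (cmod z)) * (P' (cmod z) + Q' (cmod z)) > 0"
  shows "cmod (radial_map_dzbar P Q P' Q' m l z) < cmod (radial_map_dz P Q P' Q' m l z)"
proof -
  define \<rho> where "\<rho> = cmod z"
  define p q p' q' where "p = P \<rho>" and "q = Q \<rho>" and "p' = P' \<rho>" and "q' = Q' \<rho>"
  have \<rho>: "\<rho> > 0" using z by (simp add: \<rho>_def)
  define X1 X2 Y1 Y2 where "X1 = p' + real m * p / \<rho>" and "X2 = q' - real l * q / \<rho>"
    and "Y1 = p' - real m * p / \<rho>" and "Y2 = q' + real l * q / \<rho>"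
  have sq: "X1\<^sup>2 + X2\<^sup>2 - Y1\<^sup>2 - Y2\<^sup>2 = 4 * (real m * p * p' - real l * q * q') / \<rho>"
    unfolding X1_def X2_def Y1_def Y2_def using \<rho> by (simp add: power2_eq_square field_simps)
  have cross: "\<bar>X1 * X2 - Y1 * Y2\<bar> = 2 * (real l * p' * q - real m * p * q') / \<rho>"
  proof -
    have "real m * p * q' \<le> 0" "real l * p' * q \<ge> 0"
      using nonneg by (simp_all add: p_def q_def p'_def q'_def \<rho>_def mult_nonneg_nonpos)
    then have "2 * (real m * p * q' - real l * p' * q) / \<rho> \<le> 0"
      using \<rho> by (simp add: divide_nonpos_pos)
    moreover have "X1 * X2 - Y1 * Y2 = 2 * (real m * p * q' - real l * p' * q) / \<rho>"
      unfolding X1_def X2_def Y1_def Y2_def using \<rho> by (simp add: field_simps)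
    ultimately show ?thesis by (simp only: abs_of_nonpos) (simp add: minus_divide_left)
  qed
  have "X1\<^sup>2 + X2\<^sup>2 - Y1\<^sup>2 - Y2\<^sup>2 - 2 * \<bar>X1 * X2 - Y1 * Y2\<bar>
      = 4 * ((real m * p - real l * q) * (p' + q')) / \<rho>"
    unfolding sq cross using \<rho> by (simp add: field_simps)
  moreover have "0 < 4 * ((real m * p - real l * q) * (p' + q')) / \<rho>"
    using jacobian \<rho> by (simp add: p_def q_def p'_def q'_def \<rho>_def)
  ultimately have "X1\<^sup>2 + X2\<^sup>2 - Y1\<^sup>2 - Y2\<^sup>2 > 2 * \<bar>X1 * X2 - Y1 * Y2\<bar>"
    by linarith
  from norm_unit_combination_less[OF _ _ this, of "sgn z ^ m" "cnj (sgn z) ^ l"] z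
  show ?thesis
    unfolding radial_map_dz_def radial_map_dzbar_def Let_def \<rho>_def[symmetric] p_def[symmetric]
      q_def[symmetric] p'_def[symmetric] q'_def[symmetric] X1_def[symmetric] X2_def[symmetric]
      Y1_def[symmetric] Y2_def[symmetric]
    by (simp add: norm_mult norm_power norm_divide norm_sgn)
qed

lemma norm_radial_map_le:
  assumes "z \<noteq> 0" "P (cmod z) \<ge> 0" "Q (cmod z) \<ge> 0"
  shows "cmod (radial_map P Q m l z) \<le> P (cmod z) + Q (cmod z)"
  using norm_triangle_ineq[of "of_real (P (cmod z)) * sgn z ^ m" "of_real (Q (cmod z)) * cnj (sgn z) ^ l"]
    assms by (simp add: radial_map_def norm_mult norm_power norm_sgn)

lemma radial_map_rotate:
  assumes "cmod \<omega> = 1" and "cnj \<omega> ^ l = \<omega> ^ m"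
  shows "radial_map P Q m l (\<omega> * z) = \<omega> ^ m * radial_map P Q m l z"
proof -
  have "sgn \<omega> = \<omega>" using assms(1) by (simp add: sgn_complex_eq)
  then show ?thesis
    using assms by (simp add: radial_map_def norm_mult sgn_mult power_mult_distrib algebra_simps)
qed

lemma continuous_on_radial_map_derivatives:
  assumes "0 \<notin> S"
    and "continuous_on {0<..} P" "continuous_on {0<..} Q" "continuous_on {0<..} P'" "continuous_on {0<..} Q'"
  shows "continuous_on S (radial_map_dz P Q P' Q' m l)" and "continuous_on S (radial_map_dzbar P Q P' Q' m l)"
proof -
  have cont: "continuous_on S (\<lambda>z. complex_of_real (f (cmod z)))" if "continuous_on {0<..} f" for f
    by (intro continuous_intros continuous_on_compose2[OF that]) (use assms(1) in auto)
  show "continuous_on S (radial_map_dz P Q P' Q' m l)" "continuous_on S (radial_map_dzbar P Q P' Q' m l)"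
    unfolding radial_map_dz_def[abs_def] radial_map_dzbar_def[abs_def] Let_def
    using assms(1) by (auto intro!: continuous_intros cont assms(2-5))
qed

section \<open>The construction\<close>

definition ramp_sq :: "real \<Rightarrow> real" where
  "ramp_sq x = (max 0 x)\<^sup>2"

lemma ramp_sq_nonneg: "0 \<le> ramp_sq x"
  by (simp add: ramp_sq_def)

lemma ramp_sq_eq_0: "x \<le> 0 \<Longrightarrow> ramp_sq x = 0"
  by (simp add: ramp_sq_def max_def)

lemma ramp_sq_eq_square: "0 \<le> x \<Longrightarrow> ramp_sq x = x\<^sup>2"
  by (simp add: ramp_sq_def max_def)

lemma continuous_on_ramp_sq [continuous_intros]:
  "continuous_on S f \<Longrightarrow> continuous_on S (\<lambda>x. ramp_sq (f x))"
  unfolding ramp_sq_def by (intro continuous_intros)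

lemma has_real_derivative_ramp_sq: "(ramp_sq has_real_derivative 2 * max 0 x) (at x)"
proof (cases x "0::real" rule: linorder_cases)
  case less
  have "((\<lambda>_. 0) has_real_derivative 0) (at x)" by simp
  then have "(ramp_sq has_real_derivative 0) (at x)"
    by (rule has_field_derivative_transform_within_open[where S = "{..<0}"])
      (use less in \<open>auto simp: ramp_sq_eq_0\<close>)
  then show ?thesis using less by simp
next
  case equal
  have "\<forall>\<^sub>F y in at 0. max 0 y = (ramp_sq y - ramp_sq 0) / (y - 0)"
    unfolding eventually_at by (intro exI[of _ 1]) (auto simp: ramp_sq_def max_def power2_eq_square)
  moreover have "((\<lambda>y::real. max 0 y) \<longlongrightarrow> max 0 0) (at 0)"
    by (intro tendsto_intros)
  ultimately have "((\<lambda>y. (ramp_sq y - ramp_sq 0) / (y - 0)) \<longlongrightarrow> 2 * max 0 (0::real)) (at 0)"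
    using tendsto_cong by force
  then show ?thesis using equal by (simp add: has_field_derivative_iff)
next
  case greater
  have "((\<lambda>x. x\<^sup>2) has_real_derivative 2 * x) (at x)"
    by (rule derivative_eq_intros refl | simp)+
  then have "(ramp_sq has_real_derivative 2 * x) (at x)"
    by (rule has_field_derivative_transform_within_open[where S = "{0<..}"])
      (use greater in \<open>auto simp: ramp_sq_eq_square\<close>)
  then show ?thesis using greater by simp
qed

lemma open_annulus: "open {z::complex. a < cmod z \<and> cmod z < b}"
  by (intro open_Collect_conj open_Collect_less continuous_intros)

locale annulus_construction =
  fixes l m :: nat and r0 r1 r2 :: real
  assumes l: "l \<ge> 2" and m: "m \<ge> 2" and r0: "0 < r0" and r1: "0 < r1" and r12: "r1 < r2"
begin

definition "rc = (r1 + r2) / 2"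
definition "ra = (r1 + rc) / 2"
definition "rb = (rc + r2) / 2"

text \<open>The ratio \<open>kap = bet / alp\<close> puts the unique critical radius of \<open>Phi\<close> at \<open>rc\<close>; the
  quadratic ramp corrections, active only outside the band \<open>[ra, rb]\<close>, enforce the boundary
  values \<open>P r1 = 0\<close>, \<open>Q r1 = r0\<close>, \<open>P r2 = r0\<close>, \<open>Q r2 = 0\<close>.\<close>

definition "kap = real m * rc ^ (l + m) / real l"
definition "alp = r0 / max (r1 ^ m + kap / r1 ^ l) (r2 ^ m + kap / r2 ^ l)"
definition "bet = alp * kap"
definition "Phi x = alp * x ^ m + bet / x ^ l"
definition "dPhi x = real m * alp * x ^ (m - 1) - real l * bet / x ^ (l + 1)"
definition "ca = alp * r1 ^ m / (ra - r1)\<^sup>2"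
definition "cb = (r0 - bet / r1 ^ l) / (ra - r1)\<^sup>2"
definition "cA = (r0 - alp * r2 ^ m) / (r2 - rb)\<^sup>2"
definition "cB = (bet / r2 ^ l) / (r2 - rb)\<^sup>2"
definition "P x = alp * x ^ m - ca * ramp_sq (ra - x) + cA * ramp_sq (x - rb)"
definition "Q x = bet / x ^ l + cb * ramp_sq (ra - x) - cB * ramp_sq (x - rb)"
definition "dP x = real m * alp * x ^ (m - 1) + 2 * ca * max 0 (ra - x) + 2 * cA * max 0 (x - rb)"
definition "dQ x = - (real l * bet / x ^ (l + 1)) - 2 * cb * max 0 (ra - x) - 2 * cB * max 0 (x - rb)"
definition "F = radial_map P Q m l"

lemma radii_order: "r1 < ra" "ra < rc" "rc < rb" "rb < r2" "0 < ra"
  using r1 r12 by (auto simp: ra_def rb_def rc_def field_simps)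

lemma kap_pos: "0 < kap" and alp_pos: "0 < alp" and bet_pos: "0 < bet"
proof -
  show "0 < kap" using radii_order l m by (simp add: kap_def)
  then have "0 < r1 ^ m + kap / r1 ^ l" using r1 by (intro add_pos_pos) auto
  then have "0 < max (r1 ^ m + kap / r1 ^ l) (r2 ^ m + kap / r2 ^ l)"
    by (simp add: less_max_iff_disj)
  then show "0 < alp" using r0 by (simp add: alp_def)
  with \<open>0 < kap\<close> show "0 < bet" by (simp add: bet_def)
qed

lemma Phi_r1_le: "Phi r1 \<le> r0" and Phi_r2_le: "Phi r2 \<le> r0"
proof -
  define M where "M = max (r1 ^ m + kap / r1 ^ l) (r2 ^ m + kap / r2 ^ l)"
  have Phi: "Phi x = alp * (x ^ m + kap / x ^ l)" for x
    by (simp add: Phi_def bet_def algebra_simps)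
  have "0 < r1 ^ m + kap / r1 ^ l" using r1 kap_pos by (intro add_pos_pos) auto
  then have "0 < M" by (simp add: M_def less_max_iff_disj)
  then have "alp * M = r0" by (simp add: alp_def M_def)
  then show "Phi r1 \<le> r0" "Phi r2 \<le> r0"
    unfolding Phi using alp_pos by (metis M_def max.cobounded1 max.cobounded2 mult_left_mono less_imp_le)+
qed

lemma ramp_coeffs: "0 \<le> ca" "ca \<le> cb" "0 \<le> cB" "cB \<le> cA"
proof -
  show "0 \<le> ca" using alp_pos r1 by (simp add: ca_def)
  have "alp * r1 ^ m \<le> r0 - bet / r1 ^ l" using Phi_r1_le by (simp add: Phi_def)
  then show "ca \<le> cb" unfolding ca_def cb_def by (rule divide_right_mono) simp
  show "0 \<le> cB" using bet_pos r1 r12 by (simp add: cB_def)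
  have "bet / r2 ^ l \<le> r0 - alp * r2 ^ m" using Phi_r2_le by (simp add: Phi_def)
  then show "cB \<le> cA" unfolding cA_def cB_def by (rule divide_right_mono) simp
qed

lemma has_real_derivative_Phi: "0 < x \<Longrightarrow> (Phi has_real_derivative dPhi x) (at x)"
  unfolding Phi_def[abs_def] dPhi_def
  by (rule derivative_eq_intros refl | simp)+ (use l in \<open>cases l, auto simp: field_simps\<close>)

lemma has_real_derivative_P: "(P has_real_derivative dP x) (at x)"
  unfolding P_def[abs_def] dP_def
  by (rule derivative_eq_intros has_real_derivative_ramp_sq[THEN DERIV_chain2] refl | simp)+

lemma has_real_derivative_Q: "0 < x \<Longrightarrow> (Q has_real_derivative dQ x) (at x)"
  unfolding Q_def[abs_def] dQ_def
  by (rule derivative_eq_intros has_real_derivative_ramp_sq[THEN DERIV_chain2] refl | simp)+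
    (use l in \<open>cases l, auto simp: field_simps\<close>)

lemma dPhi_eq: "0 < x \<Longrightarrow> dPhi x = real m * alp * (x ^ (l + m) - rc ^ (l + m)) / x ^ (l + 1)"
proof -
  assume "0 < x"
  moreover have "x * x ^ (l + m - 1) = x ^ (l + m)" using m by (simp flip: power_Suc)
  ultimately show ?thesis
    using l m by (simp add: dPhi_def bet_def kap_def field_simps power_add[symmetric])
qed

lemma dPhi_neg: "0 < x \<Longrightarrow> x < rc \<Longrightarrow> dPhi x < 0"
proof -
  assume x: "0 < x" "x < rc"
  have "x ^ (l + m) < rc ^ (l + m)" using x m by (intro power_strict_mono) auto
  then show ?thesis using x alp_pos m by (simp add: dPhi_eq divide_neg_pos mult_pos_neg)
qed

lemma dPhi_pos: "rc < x \<Longrightarrow> 0 < dPhi x"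
proof -
  assume x: "rc < x"
  have "rc ^ (l + m) < x ^ (l + m)" using x radii_order m by (intro power_strict_mono) auto
  then show ?thesis using x alp_pos m radii_order by (simp add: dPhi_eq)
qed

lemma continuous_on_Phi: "0 < a \<Longrightarrow> continuous_on {a..b} Phi"
  unfolding Phi_def by (intro continuous_intros) auto

lemma Phi_less_Phi_r1: "r1 < x \<Longrightarrow> x \<le> rc \<Longrightarrow> Phi x < Phi r1"
  by (rule DERIV_neg_imp_decreasing_open[where f = Phi])
    (use radii_order r1 in \<open>auto intro!: exI has_real_derivative_Phi dPhi_neg continuous_on_Phi\<close>)

lemma Phi_less_Phi_r2: "rc \<le> x \<Longrightarrow> x < r2 \<Longrightarrow> Phi x < Phi r2"
  by (rule DERIV_pos_imp_increasing_open[where f = Phi])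
    (use radii_order r1 in \<open>auto intro!: exI has_real_derivative_Phi dPhi_pos continuous_on_Phi\<close>)

lemma P_le: "x < rb \<Longrightarrow> P x \<le> alp * x ^ m"
  using ramp_coeffs ramp_sq_nonneg[of "ra - x"] by (simp add: P_def ramp_sq_eq_0)

lemma Q_ge: "x < rb \<Longrightarrow> bet / x ^ l \<le> Q x"
  using ramp_coeffs ramp_sq_nonneg[of "ra - x"] by (simp add: Q_def ramp_sq_eq_0)

lemma P_ge: "ra < x \<Longrightarrow> alp * x ^ m \<le> P x"
  using ramp_coeffs ramp_sq_nonneg[of "x - rb"] by (simp add: P_def ramp_sq_eq_0)

lemma Q_le: "ra < x \<Longrightarrow> Q x \<le> bet / x ^ l"
  using ramp_coeffs ramp_sq_nonneg[of "x - rb"] by (simp add: Q_def ramp_sq_eq_0)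

lemma dP_nonneg: "0 < x \<Longrightarrow> 0 \<le> dP x"
  using ramp_coeffs alp_pos by (simp add: dP_def)

lemma dQ_nonpos: "0 < x \<Longrightarrow> dQ x \<le> 0"
proof -
  assume "0 < x"
  then have "0 \<le> real l * bet / x ^ (l + 1)" using bet_pos by simp
  moreover have "0 \<le> cb * max 0 (ra - x)" "0 \<le> cB * max 0 (x - rb)" using ramp_coeffs by auto
  ultimately show ?thesis unfolding dQ_def by linarith
qed

lemma dP_plus_dQ: "dP x + dQ x = dPhi x + 2 * (ca - cb) * max 0 (ra - x) + 2 * (cA - cB) * max 0 (x - rb)"
  by (simp add: dP_def dQ_def dPhi_def algebra_simps)

lemma Phi_weighted_difference: "0 < x \<Longrightarrow> real m * (alp * x ^ m) - real l * (bet / x ^ l) = x * dPhi x"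
proof -
  assume x: "0 < x"
  have "x * x ^ (m - 1) = x ^ m" using m by (simp flip: power_Suc)
  with x show ?thesis by (simp add: dPhi_def field_simps)
qed

lemma jacobian_pos:
  assumes x: "0 < x" "x \<noteq> rc"
  shows "(real m * P x - real l * Q x) * (dP x + dQ x) > 0"
proof (cases "x < rc")
  case True
  then have "x < rb" using radii_order by simp
  then have "real m * P x - real l * Q x \<le> real m * (alp * x ^ m) - real l * (bet / x ^ l)"
    using P_le Q_ge by (intro diff_mono mult_left_mono) auto
  also have "\<dots> < 0"
    using Phi_weighted_difference dPhi_neg True x by (simp add: mult_pos_neg)
  finally have "real m * P x - real l * Q x < 0" .
  moreover have "dP x + dQ x < 0"
  proof -
    have "(ca - cb) * max 0 (ra - x) \<le> 0" using ramp_coeffs by (simp add: mult_nonpos_nonneg)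
    then show ?thesis
      using dPhi_neg[OF x(1) True] \<open>x < rb\<close> by (simp add: dP_plus_dQ algebra_simps)
  qed
  ultimately show ?thesis by (simp add: mult_neg_neg)
next
  case False
  then have "rc < x" "ra < x" using x radii_order by auto
  have "0 < real m * (alp * x ^ m) - real l * (bet / x ^ l)"
    using Phi_weighted_difference dPhi_pos \<open>rc < x\<close> x by simp
  also have "\<dots> \<le> real m * P x - real l * Q x"
    using P_ge Q_le \<open>ra < x\<close> by (intro diff_mono mult_left_mono) auto
  finally have "0 < real m * P x - real l * Q x" .
  moreover have "0 < dP x + dQ x"
    using dPhi_pos[OF \<open>rc < x\<close>] \<open>ra < x\<close> ramp_coeffs by (simp add: dP_plus_dQ add_pos_nonneg)
  ultimately show ?thesis by simp
qed

lemma ramp_coeff_eqs: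
  "ca * (ra - r1)\<^sup>2 = alp * r1 ^ m" "cb * (ra - r1)\<^sup>2 = r0 - bet / r1 ^ l"
  "cA * (r2 - rb)\<^sup>2 = r0 - alp * r2 ^ m" "cB * (r2 - rb)\<^sup>2 = bet / r2 ^ l"
  using radii_order by (simp_all add: ca_def cb_def cA_def cB_def)

lemma P_r1: "P r1 = 0" and Q_r1: "Q r1 = r0" and P_r2: "P r2 = r0" and Q_r2: "Q r2 = 0"
  using radii_order ramp_coeff_eqs
  by (simp_all add: P_def Q_def ramp_sq_eq_0 ramp_sq_eq_square)

lemma P_nonneg: assumes "r1 \<le> x" "x \<le> r2" shows "0 \<le> P x"
proof (cases "x \<le> ra")
  case True
  have "(ra - x)\<^sup>2 \<le> (ra - r1)\<^sup>2" using assms True by (intro power_mono) auto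
  then have "ca * (ra - x)\<^sup>2 \<le> alp * r1 ^ m"
    using ramp_coeffs ramp_coeff_eqs by (metis mult_left_mono)
  also have "\<dots> \<le> alp * x ^ m" using assms alp_pos r1 by (intro mult_left_mono power_mono) auto
  finally show ?thesis
    using True radii_order by (simp add: P_def ramp_sq_eq_0 ramp_sq_eq_square)
next
  case False
  then show ?thesis using P_ge[of x] alp_pos assms r1 by (smt (verit) zero_le_power zero_le_mult_iff)
qed

lemma Q_nonneg: assumes "r1 \<le> x" "x \<le> r2" shows "0 \<le> Q x"
proof (cases "rb \<le> x")
  case True
  have "(x - rb)\<^sup>2 \<le> (r2 - rb)\<^sup>2" using assms True by (intro power_mono) auto
  then have "cB * (x - rb)\<^sup>2 \<le> bet / r2 ^ l"
    using ramp_coeffs ramp_coeff_eqs by (metis mult_left_mono)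
  also have "\<dots> \<le> bet / x ^ l"
    using assms bet_pos r1 by (intro divide_left_mono power_mono mult_pos_pos) auto
  finally show ?thesis
    using True radii_order by (simp add: Q_def ramp_sq_eq_0 ramp_sq_eq_square)
next
  case False
  then show ?thesis using Q_ge[of x] bet_pos assms r1 by (smt (verit) zero_le_power divide_nonneg_nonneg)
qed

lemma P_plus_Q_eq: "P x + Q x = Phi x + (cb - ca) * ramp_sq (ra - x) + (cA - cB) * ramp_sq (x - rb)"
  by (simp add: P_def Q_def Phi_def algebra_simps)

lemma P_plus_Q_le_inner: assumes "r1 \<le> x" "x \<le> rc" shows "P x + Q x \<le> r0 + (Phi x - Phi r1)"
proof -
  have "ramp_sq (ra - x) \<le> (ra - r1)\<^sup>2"
    using assms by (cases "x \<le> ra") (simp_all add: ramp_sq_eq_0 ramp_sq_eq_square power_mono)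
  then have "(cb - ca) * ramp_sq (ra - x) \<le> (cb - ca) * (ra - r1)\<^sup>2"
    using ramp_coeffs by (intro mult_left_mono) auto
  also have "\<dots> = r0 - Phi r1" using ramp_coeff_eqs by (simp add: Phi_def algebra_simps)
  finally show ?thesis
    using assms radii_order by (simp add: P_plus_Q_eq ramp_sq_eq_0)
qed

lemma P_plus_Q_le_outer: assumes "rc \<le> x" "x \<le> r2" shows "P x + Q x \<le> r0 + (Phi x - Phi r2)"
proof -
  have "ramp_sq (x - rb) \<le> (r2 - rb)\<^sup>2"
    using assms by (cases "rb \<le> x") (simp_all add: ramp_sq_eq_0 ramp_sq_eq_square power_mono)
  then have "(cA - cB) * ramp_sq (x - rb) \<le> (cA - cB) * (r2 - rb)\<^sup>2"
    using ramp_coeffs by (intro mult_left_mono) auto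
  also have "\<dots> = r0 - Phi r2" using ramp_coeff_eqs by (simp add: Phi_def algebra_simps)
  finally show ?thesis
    using assms radii_order by (simp add: P_plus_Q_eq ramp_sq_eq_0)
qed

lemma P_plus_Q_le: "r1 \<le> x \<Longrightarrow> x \<le> r2 \<Longrightarrow> P x + Q x \<le> r0"
  using P_plus_Q_le_inner[of x] P_plus_Q_le_outer[of x] Phi_less_Phi_r1[of x] Phi_less_Phi_r2[of x]
  by (cases "x \<le> rc"; cases "x = r1"; cases "x = r2") auto

lemma P_plus_Q_less: "r1 < x \<Longrightarrow> x < r2 \<Longrightarrow> P x + Q x < r0"
  using P_plus_Q_le_inner[of x] P_plus_Q_le_outer[of x] Phi_less_Phi_r1[of x] Phi_less_Phi_r2[of x]
  by (cases "x \<le> rc") auto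

lemma F_has_derivative:
  assumes "z \<noteq> 0"
  shows "(F has_derivative
     (\<lambda>h. radial_map_dz P Q dP dQ m l z * h + radial_map_dzbar P Q dP dQ m l z * cnj h)) (at z)"
proof -
  have "0 < cmod z" using assms by simp
  with assms show ?thesis
    unfolding F_def
    by (intro has_derivative_radial_map[where P' = dP and Q' = dQ] has_real_derivative_P has_real_derivative_Q)
qed

lemma continuous_on_F: "0 \<notin> S \<Longrightarrow> continuous_on S F"
  by (intro continuous_at_imp_continuous_on ballI has_derivative_continuous[OF F_has_derivative]) auto

lemma F_band: assumes "ra < cmod w" "cmod w < rb" shows "F w = of_real alp * w ^ m + of_real bet / w ^ l"
proof -
  have "w \<noteq> 0" using assms radii_order by auto
  moreover have "P (cmod w) = alp * cmod w ^ m" "Q (cmod w) = bet / cmod w ^ l"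
    using assms by (simp_all add: P_def Q_def ramp_sq_eq_0)
  ultimately show ?thesis
    by (simp add: F_def radial_map_def cnj_sgn_complex) (simp add: sgn_complex_eq power_divide)
qed

lemma F_r1: "cmod z = r1 \<Longrightarrow> F z = of_real r0 * of_real r1 ^ l / z ^ l"
  using r1 by (auto simp: F_def radial_map_def P_r1 Q_r1 cnj_sgn_complex power_divide)

lemma F_r2: "cmod z = r2 \<Longrightarrow> F z = of_real r0 * z ^ m / of_real r2 ^ m"
  by (simp add: F_def radial_map_def P_r2 Q_r2 sgn_complex_eq power_divide)

lemma F_rotate: "F (cis (2 * pi / real (l + m)) * z) = cis (2 * real m * pi / real (l + m)) * F z"
proof -
  define \<omega> where "\<omega> = cis (2 * pi / real (l + m))"
  have "cnj \<omega> ^ l = cis (real l * - (2 * pi / real (l + m))) * cis (2 * pi)"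
    by (simp only: \<omega>_def cis_cnj Complex.DeMoivre) simp
  also have "\<dots> = \<omega> ^ m"
    unfolding \<omega>_def Complex.DeMoivre cis_mult using l by (intro arg_cong[where f = cis]) (simp add: field_simps)
  finally have "cnj \<omega> ^ l = \<omega> ^ m" .
  moreover have "\<omega> ^ m = cis (2 * real m * pi / real (l + m))"
    by (simp add: \<omega>_def Complex.DeMoivre mult_ac)
  ultimately show ?thesis
    unfolding F_def using radial_map_rotate[of \<omega>] by (simp add: \<omega>_def)
qed

lemma norm_F_le: "r1 \<le> cmod z \<Longrightarrow> cmod z \<le> r2 \<Longrightarrow> cmod (F z) \<le> P (cmod z) + Q (cmod z)"
  unfolding F_def using r1 by (intro norm_radial_map_le P_nonneg Q_nonneg) auto

lemma F_closed_annulus: "F ` {z. r1 \<le> cmod z \<and> cmod z \<le> r2} \<subseteq> cball 0 r0"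
proof (rule image_subsetI)
  fix z assume "z \<in> {z. r1 \<le> cmod z \<and> cmod z \<le> r2}"
  then have "cmod (F z) \<le> r0" using norm_F_le P_plus_Q_le by (smt (verit) mem_Collect_eq)
  then show "F z \<in> cball 0 r0" by simp
qed

lemma F_open_annulus: "F ` {z. r1 < cmod z \<and> cmod z < r2} \<subseteq> ball 0 r0"
proof (rule image_subsetI)
  fix z assume "z \<in> {z. r1 < cmod z \<and> cmod z < r2}"
  then have "cmod (F z) < r0" using norm_F_le P_plus_Q_less by (smt (verit) mem_Collect_eq)
  then show "F z \<in> ball 0 r0" by simp
qed

lemma F_locally_quasiconformal:
  assumes z0: "r1 < cmod z0" "cmod z0 < r2" and off_critical: "cmod z0 \<noteq> rc"
  shows "\<exists>V. open V \<and> z0 \<in> V \<and> V \<subseteq> {z. r1 < cmod z \<and> cmod z < r2} \<and> quasiconformal_on F V"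
proof -
  let ?U = "{z. r1 < cmod z \<and> cmod z < r2} \<inter> {z. cmod z \<noteq> rc}"
  have U: "open ?U" by (intro open_Int open_annulus open_Collect_neq continuous_intros)
  have "0 \<notin> ?U" using r1 by auto
  moreover have "continuous_on {0<..} f" if "f \<in> {P, Q, dP, dQ}" for f
    using that unfolding P_def Q_def dP_def dQ_def by (auto intro!: continuous_intros)
  ultimately have cont: "continuous_on ?U (radial_map_dz P Q dP dQ m l)"
    "continuous_on ?U (radial_map_dzbar P Q dP dQ m l)"
    by (simp_all add: continuous_on_radial_map_derivatives)
  have deriv: "(F has_derivative (\<lambda>h. radial_map_dz P Q dP dQ m l w * h +
      radial_map_dzbar P Q dP dQ m l w * cnj h)) (at w)" if "w \<in> ?U" for w
    using that r1 by (intro F_has_derivative) auto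
  have "z0 \<noteq> 0" and \<rho>: "0 < cmod z0" and bounds: "r1 \<le> cmod z0" "cmod z0 \<le> r2"
    using z0 r1 by auto
  then have "cmod (radial_map_dzbar P Q dP dQ m l z0) < cmod (radial_map_dz P Q dP dQ m l z0)"
    by (intro radial_map_dzbar_less_dz[where P = P and Q = Q and P' = dP and Q' = dQ]
        P_nonneg[OF bounds] Q_nonneg[OF bounds] dP_nonneg[OF \<rho>] dQ_nonpos[OF \<rho>]
        jacobian_pos[OF \<rho> off_critical])
  moreover have "z0 \<in> ?U" using z0 off_critical by auto
  ultimately obtain V where "open V" "z0 \<in> V" "V \<subseteq> ?U" "quasiconformal_on F V"
    using exists_quasiconformal_nbhd[OF U _ deriv cont] by blast
  then show ?thesis by (intro exI[of _ V]) auto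
qed

lemma F_quasiregular: "quasiregular_on F {z. r1 < cmod z \<and> cmod z < r2}"
proof (rule quasiregular_onI)
  let ?U = "{z. r1 < cmod z \<and> cmod z < r2}"
  show "open ?U" by (rule open_annulus)
  show "continuous_on ?U F" using r1 by (intro continuous_on_F) auto
  fix z0 assume z0: "z0 \<in> ?U"
  show "\<exists>V. open V \<and> z0 \<in> V \<and> V \<subseteq> ?U \<and> (quasiconformal_on F V \<or> F holomorphic_on V)"
  proof (cases "cmod z0 = rc")
    case True
    let ?V = "{z. ra < cmod z \<and> cmod z < rb}"
    have "(\<lambda>w. of_real alp * w ^ m + of_real bet / w ^ l) holomorphic_on ?V"
      using radii_order by (intro holomorphic_intros) auto
    then have "F holomorphic_on ?V"
      by (rule holomorphic_transform) (simp add: F_band)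
    moreover have "z0 \<in> ?V" "?V \<subseteq> ?U" using True radii_order by auto
    ultimately show ?thesis using open_annulus by blast
  next
    case False
    then show ?thesis using F_locally_quasiconformal z0 by blast
  qed
qed

end

theorem lemma2p2:
  fixes l m :: nat and r0 r1 r2 :: real
  assumes "l \<ge> 2" and "m \<ge> 2" and "1 / real l + 1 / real m < 1"
    and "0 < r0" and "r0 < 1"
    and "r1 = r0 + (1 - r0) / real l" and "r2 = 1 - (1 - r0) / real m"
  shows "\<exists>F :: complex \<Rightarrow> complex.
     continuous_on {z. r1 \<le> cmod z \<and> cmod z \<le> r2} F \<and>
     F ` {z. r1 \<le> cmod z \<and> cmod z \<le> r2} \<subseteq> cball 0 r0 \<and>
     (\<forall>z. cmod z = r1 \<longrightarrow> F z = of_real r0 * of_real r1 ^ l / z ^ l) \<and>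
     (\<forall>z. cmod z = r2 \<longrightarrow> F z = of_real r0 * z ^ m / of_real r2 ^ m) \<and>
     F ` {z. r1 < cmod z \<and> cmod z < r2} \<subseteq> ball 0 r0 \<and>
     quasiregular_on F {z. r1 < cmod z \<and> cmod z < r2} \<and>
     (\<forall>z\<in>{z. r1 \<le> cmod z \<and> cmod z \<le> r2}.
        F (cis (2 * pi / real (l + m)) * z) = cis (2 * real m * pi / real (l + m)) * F z)"
proof -
  have "0 < r1" using assms(1,4-6) by (simp add: add_pos_nonneg)
  have "r2 - r1 = (1 - r0) * (1 - (1 / real l + 1 / real m))"
    unfolding assms(6,7) using assms(1,2) by (simp add: field_simps)
  moreover have "0 < (1 - r0) * (1 - (1 / real l + 1 / real m))" using assms(3,5) by simp
  ultimately have "r1 < r2" by linarith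
  interpret annulus_construction l m r0 r1 r2
    using assms \<open>0 < r1\<close> \<open>r1 < r2\<close> by unfold_locales auto
  have "continuous_on {z. r1 \<le> cmod z \<and> cmod z \<le> r2} F"
    using r1 by (intro continuous_on_F) auto
  then show ?thesis
    using F_closed_annulus F_r1 F_r2 F_open_annulus F_quasiregular F_rotate by blast
qed

end
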